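(* Let $t$ be a Pólya tree with $k\ge 2$ nodes, let $w(t)=\ell(t)/k!$, and let $\tilde\rho=1+\epsilon$ be the smallest positive real number satisfying $\int_0^{\tilde\rho} e^{-w(t)v^k}\,dv = 1$ (the dominant singularity of $S_t$). Then \[ \tilde\rho = 1+\epsilon < 1 + \frac{2w(t)}{k}. \]
   Context: A Pólya tree is an unlabeled rooted non-plane tree. For a Pólya tree $t$ with $k$ nodes, $\ell(t)$ is the number of labelings of its nodes by $1,\dots,k$ that increase along every path from the root. $S_t(z)=\ln\frac{1}{1-\int_0^z e^{-w(t)v^k}\,dv}-w(t)z^k$ is the exponential generating function of recursive trees (increasingly labeled rooted non-plane trees) having no fringe subtree of shape $t$; its dominant singularity is the smallest positive solution of the equation above. *)

theory Defs
  imports "HOL-Analysis.Analysis" "HOL-Library.Multiset"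
begin

text \<open>Polya trees: unlabeled rooted non-plane trees (children form a multiset).\<close>
datatype ptree = PNode "ptree multiset"

datatype ltree = LNode nat "ltree multiset"

primrec nodes :: "ptree \<Rightarrow> nat" where
  "nodes (PNode M) = Suc (\<Sum>\<^sub># (image_mset nodes M))"

primrec root_label :: "ltree \<Rightarrow> nat" where
  "root_label (LNode a M) = a"

primrec labels :: "ltree \<Rightarrow> nat multiset" where
  "labels (LNode a M) = {#a#} + \<Sum>\<^sub># (image_mset labels M)"

primrec increasing :: "ltree \<Rightarrow> bool" where
  "increasing (LNode a M) = (\<forall>x \<in># image_mset (\<lambda>c. (root_label c, increasing c)) M. a < fst x \<and> snd x)"

primrec shape :: "ltree \<Rightarrow> ptree" where
  "shape (LNode a M) = PNode (image_mset shape M)"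

text \<open>Number of increasing labelings of t by 1..k (k = number of nodes),
  i.e. number of recursive trees of shape t.\<close>
definition ell :: "ptree \<Rightarrow> nat" where
  "ell t = card {lt. shape lt = t \<and> labels lt = mset_set {1..nodes t} \<and> increasing lt}"

definition wt :: "ptree \<Rightarrow> real" where
  "wt t = real (ell t) / fact (nodes t)"

end

theory Submission
  imports Defs
begin

(*
  Deleting the largest label of an increasingly labelled tree removes a leaf, and the tree is
  recovered by grafting that leaf below one of the remaining k - 1 nodes; by induction there are
  at most (k - 1)! increasingly labelled trees on k labels. Labelling in preorder shows that every
  shape has an increasing labelling, so 1 <= l(t) <= (k - 1)! and 0 < w <= 1/k.

  Since the integral grows with its upper limit, it suffices to show that it exceeds 1 at
  r = 1 + 2w/k. By e^(-x) >= 1 - x it is at least r - w r^(k+1)/(k+1), which exceeds 1 as soon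
  as r^(k+1) < 2(k+1)/k; for k >= 3 this follows from r <= 1 + 2/k^2. For k = 2 necessarily
  w = 1/2, and the cubic Taylor bound for e^(-x) gives an integral over [0, 3/2] larger than 1.
*)

section \<open>Counting increasing labellings\<close>

lemma root_label_in_labels: "root_label lt \<in># labels lt"
  by (cases lt) auto

lemma labels_child_subseteq:
  assumes "c \<in># N"
  shows "labels c \<subseteq># labels (LNode a N)"
proof -
  obtain N' where "N = add_mset c N'"
    using assms by (blast dest: multi_member_split)
  then show ?thesis
    by (simp add: subseteq_mset_def)
qed

lemma root_label_le_labels:
  assumes "increasing lt" and "x \<in># labels lt"
  shows "root_label lt \<le> x"
  using assms
proof (induction lt)
  case (LNode a N)
  show ?case
  proof (cases "x = a")
    case False
    then obtain c where c: "c \<in># N" "x \<in># labels c"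
      using LNode.prems by auto
    then have "root_label c \<le> x" and "a < root_label c"
      using LNode by auto
    then show ?thesis
      by simp
  qed simp
qed

lemma increasing_max_root_leaf:
  assumes "increasing lt" and "\<forall>x\<in>#labels lt. x \<le> root_label lt"
  shows "lt = LNode (root_label lt) {#}"
proof (cases lt)
  case (LNode a N)
  have "N = {#}"
  proof (rule ccontr)
    assume "N \<noteq> {#}"
    then obtain c where c: "c \<in># N"
      by blast
    then have "root_label c \<in># labels lt"
      using LNode labels_child_subseteq root_label_in_labels by (blast dest: mset_subset_eqD)
    moreover have "a < root_label c"
      using assms(1) LNode c by simp
    ultimately show False
      using assms(2) LNode by fastforce
  qed
  then show ?thesis
    using LNode by simp
qed

primrec graft_leaf :: "nat \<Rightarrow> nat \<Rightarrow> ltree \<Rightarrow> ltree" where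
  "graft_leaf p m (LNode a N) =
    (if a = p then LNode a (add_mset (LNode m {#}) N) else LNode a (image_mset (graft_leaf p m) N))"

lemma root_label_graft_leaf [simp]: "root_label (graft_leaf p m lt) = root_label lt"
  by (cases lt) simp

lemma graft_leaf_absent: "p \<notin># labels lt \<Longrightarrow> graft_leaf p m lt = lt"
  by (induction lt) (auto intro: multiset.map_ident_strong)

definition mset_distinct :: "'a multiset \<Rightarrow> bool" where
  "mset_distinct A \<longleftrightarrow> (\<forall>x. count A x \<le> 1)"

lemma mset_distinct_subseteq: "mset_distinct A \<Longrightarrow> B \<subseteq># A \<Longrightarrow> mset_distinct B"
  unfolding mset_distinct_def by (meson mset_subset_eq_count order_trans)

lemma mset_distinct_mset_set: "mset_distinct (mset_set S)"
  unfolding mset_distinct_def by (simp add: count_mset_set')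

lemma graft_leaf_into_child:
  assumes "mset_distinct (labels (LNode a N))" and "c \<in># N" and "p \<in># labels c"
  shows "graft_leaf p m (LNode a N) = LNode a (add_mset (graft_leaf p m c) (N - {#c#}))"
proof -
  define N' where "N' = N - {#c#}"
  have N: "N = add_mset c N'"
    using assms(2) unfolding N'_def by simp
  have count_le: "count (add_mset a (labels c + \<Sum>\<^sub># (image_mset labels N'))) p \<le> 1"
    using assms(1) N unfolding mset_distinct_def by simp
  have in_c: "1 \<le> count (labels c) p"
    using assms(3) by simp
  have "p \<noteq> a"
  proof
    assume "p = a"
    then have "Suc (count (labels c) p) \<le> 1"
      using count_le by simp
    then show False
      using in_c by linarith
  qed
  moreover have "count (\<Sum>\<^sub># (image_mset labels N')) p = 0"
  proof -
    have "count (labels c) p + count (\<Sum>\<^sub># (image_mset labels N')) p \<le> 1"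
      using count_le \<open>p \<noteq> a\<close> by simp
    then show ?thesis
      using in_c by linarith
  qed
  moreover from this have "image_mset (graft_leaf p m) N' = N'"
    by (auto intro!: multiset.map_ident_strong graft_leaf_absent simp: count_eq_zero_iff)
  ultimately show ?thesis
    using N unfolding N'_def[symmetric] by simp
qed

lemma increasing_remove_max_leaf:
  assumes "increasing lt" and "mset_distinct (labels lt)" and "m \<in># labels lt"
    and "\<forall>x\<in>#labels lt. x \<le> m" and "m \<noteq> root_label lt"
  shows "\<exists>lt' p. increasing lt' \<and> labels lt' = labels lt - {#m#} \<and> p \<in># labels lt'
    \<and> lt = graft_leaf p m lt'"
  using assms
proof (induction lt)
  case (LNode a N)
  obtain c where c: "c \<in># N" "m \<in># labels c"
    using LNode.prems(3,5) by auto
  define N' where "N' = N - {#c#}"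
  have N: "N = add_mset c N'"
    using c(1) unfolding N'_def by simp
  have c_sub: "labels c \<subseteq># labels (LNode a N)"
    using c(1) by (rule labels_child_subseteq)
  have c_inc: "increasing c" and a_less: "a < root_label c"
    using c(1) LNode.prems(1) by auto
  have c_max: "\<forall>x\<in>#labels c. x \<le> m"
    using c_sub LNode.prems(4) by (blast dest: mset_subset_eqD)
  show ?case
  proof (cases "m = root_label c")
    case True
    then have "c = LNode m {#}"
      using increasing_max_root_leaf[OF c_inc] c_max by simp
    then have "increasing (LNode a N') \<and> labels (LNode a N') = labels (LNode a N) - {#m#}
      \<and> a \<in># labels (LNode a N') \<and> LNode a N = graft_leaf a m (LNode a N')"
      using LNode.prems(1) N by (auto dest: in_diffD)
    then show ?thesis
      by blast
  next
    case False
    have "mset_distinct (labels c)"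
      using LNode.prems(2) c_sub by (rule mset_distinct_subseteq)
    then obtain c' p where c': "increasing c'" "labels c' = labels c - {#m#}" "p \<in># labels c'"
      "c = graft_leaf p m c'"
      using LNode.IH[OF c(1) c_inc _ c(2) c_max False] by blast
    define lt' where "lt' = LNode a (add_mset c' N')"
    have labels_lt': "labels lt' = labels (LNode a N) - {#m#}"
      unfolding lt'_def using N c'(2) c(2) by simp
    have "increasing lt'"
      unfolding lt'_def using LNode.prems(1) N c'(1,4) a_less by auto
    moreover have "p \<in># labels lt'"
      unfolding lt'_def using c'(3) by simp
    moreover have "graft_leaf p m lt' = LNode a N"
    proof -
      have "mset_distinct (labels lt')"
        unfolding labels_lt' using LNode.prems(2) by (rule mset_distinct_subseteq) simp
      then show ?thesis
        unfolding lt'_def using graft_leaf_into_child[of a "add_mset c' N'" c' p m] c'(3,4) N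
        by simp
    qed
    ultimately show ?thesis
      using labels_lt' by metis
  qed
qed

definition increasing_trees :: "nat multiset \<Rightarrow> ltree set" where
  "increasing_trees A = {lt. increasing lt \<and> labels lt = A}"

lemma increasing_trees_singleton: "increasing_trees {#a#} \<subseteq> {LNode a {#}}"
proof
  fix lt
  assume "lt \<in> increasing_trees {#a#}"
  then have lt: "increasing lt" "labels lt = {#a#}"
    unfolding increasing_trees_def by auto
  then have "root_label lt = a"
    using root_label_in_labels[of lt] by simp
  then show "lt \<in> {LNode a {#}}"
    using increasing_max_root_leaf[OF lt(1)] lt(2) by simp
qed

lemma increasing_trees_subset_graft_leaf:
  assumes "finite S" and "m = Max S" and "S - {m} \<noteq> {}"
  shows "increasing_trees (mset_set S)
    \<subseteq> (\<lambda>(lt, p). graft_leaf p m lt) ` (increasing_trees (mset_set (S - {m})) \<times> (S - {m}))"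
proof
  fix lt
  assume "lt \<in> increasing_trees (mset_set S)"
  then have lt: "increasing lt" "labels lt = mset_set S"
    unfolding increasing_trees_def by auto
  have m: "m \<in> S" "\<forall>x\<in>S. x \<le> m"
    using assms by (auto intro: Max_in)
  obtain y where y: "y \<in> S" "y \<noteq> m"
    using assms(3) by blast
  then have "y < m"
    using m(2) by (simp add: order_le_neq_trans)
  have "m \<noteq> root_label lt"
    using root_label_le_labels[OF lt(1), of y] lt(2) y(1) \<open>y < m\<close> assms(1) by auto
  moreover have "mset_distinct (labels lt)" "m \<in># labels lt" "\<forall>x\<in>#labels lt. x \<le> m"
    using lt(2) m assms(1) mset_distinct_mset_set by auto
  ultimately obtain lt' p where lt': "increasing lt'" "labels lt' = labels lt - {#m#}" "p \<in># labels lt'"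
    "lt = graft_leaf p m lt'"
    using increasing_remove_max_leaf[OF lt(1)] by blast
  have "labels lt' = mset_set (S - {m})"
    using lt'(2) lt(2) m(1) assms(1) by (simp add: mset_set_Diff)
  then have "lt' \<in> increasing_trees (mset_set (S - {m}))" and "p \<in> S - {m}"
    using lt'(1,3) assms(1) unfolding increasing_trees_def by auto
  then show "lt \<in> (\<lambda>(lt, p). graft_leaf p m lt) ` (increasing_trees (mset_set (S - {m})) \<times> (S - {m}))"
    using lt'(4) by (auto intro!: image_eqI[where x = "(lt', p)"])
qed

lemma increasing_trees_finite_card_le:
  assumes "finite S" and "card S = Suc n"
  shows "finite (increasing_trees (mset_set S)) \<and> card (increasing_trees (mset_set S)) \<le> fact n"
  using assms
proof (induction n arbitrary: S)
  case 0
  then obtain a where "S = {a}"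
    by (metis One_nat_def card_1_singletonE)
  then have sub: "increasing_trees (mset_set S) \<subseteq> {LNode a {#}}"
    using increasing_trees_singleton by simp
  then have "card (increasing_trees (mset_set S)) \<le> 1"
    using card_mono[OF _ sub] by simp
  then show ?case
    using finite_subset[OF sub] by simp
next
  case (Suc n)
  define m where "m = Max S"
  define S' where "S' = S - {m}"
  have "m \<in> S"
    unfolding m_def using Suc.prems by (intro Max_in) auto
  then have S': "finite S'" "card S' = Suc n"
    unfolding S'_def using Suc.prems by auto
  then have "S' \<noteq> {}"
    by auto
  have IH: "finite (increasing_trees (mset_set S'))" "card (increasing_trees (mset_set S')) \<le> fact n"
    using Suc.IH[OF S'] by auto
  have sub: "increasing_trees (mset_set S)
      \<subseteq> (\<lambda>(lt, p). graft_leaf p m lt) ` (increasing_trees (mset_set S') \<times> S')"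
    using increasing_trees_subset_graft_leaf[OF Suc.prems(1) m_def] \<open>S' \<noteq> {}\<close>
    unfolding S'_def by blast
  have fin: "finite (increasing_trees (mset_set S') \<times> S')"
    using IH(1) S'(1) by simp
  have "card (increasing_trees (mset_set S)) \<le> card (increasing_trees (mset_set S') \<times> S')"
    using card_mono[OF finite_imageI[OF fin] sub] card_image_le[OF fin] by (rule order_trans)
  also have "\<dots> = card (increasing_trees (mset_set S')) * Suc n"
    by (simp only: card_cartesian_product S'(2))
  also have "\<dots> \<le> fact n * Suc n"
    using IH(2) by (rule mult_right_mono) simp
  also have "\<dots> = fact (Suc n)"
    by (simp add: mult.commute)
  finally show ?case
    using finite_subset[OF sub finite_imageI[OF fin]] by blast
qed

lemma increasing_forest_exists:
  assumes "\<forall>x\<in>#M. \<forall>a. \<exists>lt. shape lt = x \<and> labels lt = mset_set {a..<a + nodes x}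
    \<and> increasing lt \<and> root_label lt = a"
  shows "\<exists>N. image_mset shape N = M
    \<and> \<Sum>\<^sub># (image_mset labels N) = mset_set {b..<b + \<Sum>\<^sub># (image_mset nodes M)}
    \<and> (\<forall>c\<in>#N. increasing c \<and> b \<le> root_label c)"
  using assms
proof (induction M arbitrary: b)
  case empty
  show ?case
    by (rule exI[of _ "{#}"]) simp
next
  case (add x M)
  obtain N where N: "image_mset shape N = M"
    "\<Sum>\<^sub># (image_mset labels N) = mset_set {b..<b + \<Sum>\<^sub># (image_mset nodes M)}"
    "\<forall>c\<in>#N. increasing c \<and> b \<le> root_label c"
    using add.IH[of b] add.prems by force
  let ?s = "\<Sum>\<^sub># (image_mset nodes M)"
  obtain lt where lt: "shape lt = x" "labels lt = mset_set {b + ?s..<b + ?s + nodes x}"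
    "increasing lt" "root_label lt = b + ?s"
    using add.prems by auto
  have "mset_set {b..<b + ?s + nodes x} = mset_set {b..<b + ?s} + mset_set {b + ?s..<b + ?s + nodes x}"
    by (subst mset_set_Union[symmetric]) (auto simp: ivl_disj_un)
  then show ?case
    using N lt by (intro exI[of _ "add_mset lt N"]) (simp add: add.commute add.left_commute)
qed

lemma increasing_labelling_exists:
  "\<exists>lt. shape lt = t \<and> labels lt = mset_set {a..<a + nodes t} \<and> increasing lt \<and> root_label lt = a"
proof (induction t arbitrary: a)
  case (PNode M)
  let ?s = "\<Sum>\<^sub># (image_mset nodes M)"
  obtain N where N: "image_mset shape N = M" "\<Sum>\<^sub># (image_mset labels N) = mset_set {Suc a..<Suc a + ?s}"
    "\<forall>c\<in>#N. increasing c \<and> Suc a \<le> root_label c"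
    using increasing_forest_exists[of M "Suc a"] PNode by blast
  have "{a..<a + nodes (PNode M)} = insert a {Suc a..<Suc a + ?s}"
    by auto
  then show ?case
    using N by (intro exI[of _ "LNode a N"]) auto
qed

lemma nodes_pos: "0 < nodes t"
  by (cases t) simp

lemma ell_pos_le_fact: "0 < ell t \<and> ell t \<le> fact (nodes t - 1)"
proof -
  let ?L = "{lt. shape lt = t \<and> labels lt = mset_set {1..nodes t} \<and> increasing lt}"
  have sub: "?L \<subseteq> increasing_trees (mset_set {1..nodes t})"
    unfolding increasing_trees_def by auto
  have "card {1..nodes t} = Suc (nodes t - 1)"
    using nodes_pos[of t] by simp
  then have fin: "finite (increasing_trees (mset_set {1..nodes t}))"
    and card: "card (increasing_trees (mset_set {1..nodes t})) \<le> fact (nodes t - 1)"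
    using increasing_trees_finite_card_le by blast+
  obtain lt where "shape lt = t" "labels lt = mset_set {1..<1 + nodes t}" "increasing lt"
    using increasing_labelling_exists by blast
  moreover have "{1..<1 + nodes t} = {1..nodes t}"
    by auto
  ultimately have "?L \<noteq> {}"
    by auto
  then have "0 < card ?L"
    using fin sub by (simp add: card_gt_0_iff finite_subset)
  moreover have "card ?L \<le> fact (nodes t - 1)"
    using card_mono[OF fin sub] card by linarith
  ultimately show ?thesis
    unfolding ell_def by blast
qed

lemma wt_pos: "0 < wt t"
  using ell_pos_le_fact[of t] by (simp add: wt_def)

lemma wt_le_inverse_nodes: "wt t \<le> 1 / nodes t"
proof -
  have "real (ell t) \<le> fact (nodes t - 1)"
    using ell_pos_le_fact[of t] by (metis of_nat_fact of_nat_le_iff)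
  also have "\<dots> = fact (nodes t) / nodes t"
    using nodes_pos[of t] by (simp add: fact_reduce[of "nodes t"])
  finally show ?thesis
    unfolding wt_def by (simp add: field_simps)
qed

lemma wt_two_nodes: "nodes t = 2 \<Longrightarrow> wt t = 1 / 2"
  using ell_pos_le_fact[of t] by (simp add: wt_def)

section \<open>Lower bounds for the integral\<close>

lemma exp_minus_ge_cubic: "1 - x + x^2/2 - x^3/6 \<le> exp (- x)"
  for x :: real
proof -
  obtain s where "exp (- x) = (\<Sum>m<4. (- x) ^ m / fact m) + exp s / fact 4 * (- x) ^ 4"
    using Maclaurin_exp_le[of "- x" 4] by blast
  moreover have "(\<Sum>m<4. (- x) ^ m / fact m) = 1 - x + x^2/2 - x^3/6"
    by (simp add: numeral_eq_Suc fact_numeral)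
  ultimately show ?thesis
    by (simp add: zero_le_mult_iff)
qed

lemma integral_ge_antiderivative:
  fixes f p F :: "real \<Rightarrow> real"
  assumes "a \<le> b" and "continuous_on {a..b} f"
    and "\<And>x. x \<in> {a..b} \<Longrightarrow> (F has_real_derivative p x) (at x within {a..b})"
    and "\<And>x. x \<in> {a..b} \<Longrightarrow> p x \<le> f x"
  shows "F b - F a \<le> integral {a..b} f"
proof -
  have "(p has_integral F b - F a) {a..b}"
    using assms(1,3) by (intro fundamental_theorem_of_calculus)
      (simp_all add: has_real_derivative_iff_has_vector_derivative)
  then show ?thesis
    using assms(2,4) integrable_continuous_interval by (blast intro: has_integral_le integrable_integral)
qed

lemma integral_exp_minus_power_ge:
  fixes w r :: real and k :: nat
  assumes "0 \<le> r"
  shows "r - w * r ^ (k + 1) / (k + 1) \<le> integral {0..r} (\<lambda>v. exp (- w * v ^ k))"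
proof -
  have "(\<lambda>v. v - w * v ^ (k + 1) / (k + 1)) r - (\<lambda>v. v - w * v ^ (k + 1) / (k + 1)) 0
      \<le> integral {0..r} (\<lambda>v. exp (- w * v ^ k))"
  proof (rule integral_ge_antiderivative)
    fix v :: real
    show "((\<lambda>v. v - w * v ^ (k + 1) / (k + 1)) has_real_derivative 1 - w * v ^ k) (at v within {0..r})"
      by (rule derivative_eq_intros refl | simp)+
    show "1 - w * v ^ k \<le> exp (- w * v ^ k)"
      using exp_minus_ge[of "w * v ^ k"] by simp
  qed (use assms in \<open>auto intro!: continuous_intros\<close>)
  then show ?thesis
    by simp
qed

lemma integral_exp_minus_half_square_gt_one:
  "1 < integral {0..3/2} (\<lambda>v. exp (- (1/2) * v ^ 2) :: real)"
proof -
  define F :: "real \<Rightarrow> real" where "F v = v - v^3/6 + v^5/40 - v^7/336" for v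
  have "F (3/2) - F 0 \<le> integral {0..3/2} (\<lambda>v. exp (- (1/2) * v ^ 2) :: real)"
  proof (rule integral_ge_antiderivative)
    fix v :: real
    show "(F has_real_derivative 1 - v^2/2 + v^4/8 - v^6/48) (at v within {0..3/2})"
      unfolding F_def by (auto intro!: derivative_eq_intros simp: field_simps)
    show "1 - v^2/2 + v^4/8 - v^6/48 \<le> exp (- (1/2) * v ^ 2)"
      using exp_minus_ge_cubic[of "v^2/2"] by (simp add: power_divide power_mult[symmetric])
  qed (auto intro!: continuous_intros)
  moreover have "1 < F (3/2) - F 0"
    by (simp add: F_def power_divide)
  ultimately show ?thesis
    by linarith
qed

lemma one_plus_two_div_square_power_less:
  fixes k :: nat
  assumes "3 \<le> k"
  shows "(1 + 2 / k^2) ^ (k + 1) < 2 * (k + 1) / (k :: real)"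
proof (cases "k \<le> 4")
  case True
  then have "k = 3 \<or> k = 4"
    using assms by auto
  then show ?thesis
    by (auto simp: power_divide)
next
  case False
  then have k: "5 \<le> real k"
    by simp
  have "(1 + 2 / k^2) ^ (k + 1) \<le> exp (2 / k^2) ^ (k + 1)"
    by (intro power_mono) auto
  also have "\<dots> = exp (real (k + 1) * (2 / k^2))"
    by (rule exp_of_nat_mult[symmetric])
  also have "\<dots> \<le> exp (1/2)"
  proof -
    have "4 * (k + 1) \<le> 5 * (k::real)" and "5 * k \<le> (k::real) * k"
      using k by (auto intro: mult_right_mono)
    then have "4 * (k + 1) \<le> (k::real) * k"
      by linarith
    then show ?thesis
      using k by (simp add: field_simps power2_eq_square)
  qed
  also have "\<dots> \<le> 2"
    using real_exp_bound_lemma[of "1/2"] by simp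
  also have "2 < 2 * (k + 1) / (k :: real)"
    using k by (simp add: field_simps)
  finally show ?thesis .
qed

lemma integral_exp_minus_power_gt_one:
  fixes w :: real and k :: nat
  assumes "3 \<le> k" and "0 < w" and "w \<le> 1 / k"
  shows "1 < integral {0..1 + 2 * w / k} (\<lambda>v. exp (- w * v ^ k))"
proof -
  define r where "r = 1 + 2 * w / k"
  have "r ^ (k + 1) \<le> (1 + 2 / k^2) ^ (k + 1)"
    unfolding r_def using assms by (intro power_mono) (auto simp: field_simps power2_eq_square)
  also have "\<dots> < 2 * (k + 1) / k"
    using one_plus_two_div_square_power_less[OF assms(1)] .
  finally have "w * r ^ (k + 1) < w * (2 * (k + 1) / k)"
    using assms(2) by (rule mult_strict_left_mono)
  then have "w * r ^ (k + 1) / (k + 1) < 2 * w / k"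
    by (simp add: field_simps)
  then have "1 < r - w * r ^ (k + 1) / (k + 1)"
    unfolding r_def by simp
  also have "\<dots> \<le> integral {0..r} (\<lambda>v. exp (- w * v ^ k))"
    using assms by (intro integral_exp_minus_power_ge) (simp add: r_def)
  finally show ?thesis
    unfolding r_def .
qed

theorem lemma2p1:
  fixes t :: ptree and \<rho> :: real
  assumes "nodes t \<ge> 2"
    and "\<rho> > 0"
    and "integral {0..\<rho>} (\<lambda>v. exp (- wt t * v ^ nodes t)) = 1"
    and "\<forall>r. 0 < r \<and> r < \<rho> \<longrightarrow> integral {0..r} (\<lambda>v. exp (- wt t * v ^ nodes t)) \<noteq> 1"
  shows "\<rho> < 1 + 2 * wt t / real (nodes t)"
proof -
  define k where "k = nodes t"
  define w where "w = wt t"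
  have gt_one: "1 < integral {0..1 + 2 * w / k} (\<lambda>v. exp (- w * v ^ k))"
  proof (cases "k = 2")
    case True
    have w: "w = 1 / 2"
      using True unfolding k_def w_def by (rule wt_two_nodes)
    show ?thesis
      using integral_exp_minus_half_square_gt_one unfolding w True by simp
  next
    case False
    then have "3 \<le> k"
      using assms(1) unfolding k_def by simp
    then show ?thesis
      using integral_exp_minus_power_gt_one wt_pos wt_le_inverse_nodes unfolding k_def w_def by blast
  qed
  show ?thesis
  proof (rule ccontr)
    assume "\<not> \<rho> < 1 + 2 * wt t / real (nodes t)"
    then have "integral {0..1 + 2 * w / k} (\<lambda>v. exp (- w * v ^ k))
        \<le> integral {0..\<rho>} (\<lambda>v. exp (- w * v ^ k))"
      unfolding k_def w_def
      by (intro integral_subset_le integrable_continuous_interval continuous_intros) auto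
    then show False
      using gt_one assms(3) unfolding k_def w_def by simp
  qed
qed

end
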